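(* Let $w$ be a perfectly clustering Lyndon word over a totally ordered alphabet, with a palindromic special factorization $w=a_1\pi_1a_2\pi_2\cdots\pi_{k-1}a_k$. Let $s\in\{1,\dots,k-1\}$. If $\pi_s$ is the empty word, then $c_1+\cdots+c_s=c_{s+1}+\cdots+c_k$, where $c_h=|w|_{a_h}$.
   Context: $|w|_a$ denotes the number of occurrences of the letter $a$ in $w$. A special factorization of $w$ is a factorization $w=a_1\pi_1a_2\cdots\pi_{k-1}a_k$ where the set of letters occurring in $w$ is $\{a_1<\cdots<a_k\}$ and $\pi_1,\dots,\pi_{k-1}$ are words; it is palindromic if every $\pi_i$ is a palindrome. Lexicographic order: a proper prefix is smaller. A Lyndon word is a primitive word strictly smaller than its other conjugates. For a primitive word $v$ of length $n$ with conjugates $v_1<\cdots<v_n$, $\mathrm{bw}(v)$ is the word formed by the last letters of $v_1,\dots,v_n$; $v$ is perfectly clustering if $\mathrm{bw}(v)$ is weakly decreasing. *)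

theory Defs
  imports Main "HOL-Library.List_Lexorder"
begin

(* Words are lists over a linearly ordered alphabet 'a.  The order on words is
   the lexicographic order of HOL-Library.List_Lexorder (a proper prefix is smaller). *)

definition primitive :: "'a list \<Rightarrow> bool" where
  "primitive v \<longleftrightarrow> v \<noteq> [] \<and> (\<forall>u k. v = concat (replicate k u) \<longrightarrow> k = 1)"

definition conjugates :: "'a list \<Rightarrow> 'a list set" where
  "conjugates v = {rotate i v | i. i < length v}"

definition lyndon :: "'a::linorder list \<Rightarrow> bool" where
  "lyndon v \<longleftrightarrow> primitive v \<and> (\<forall>u \<in> conjugates v. u \<noteq> v \<longrightarrow> v < u)"

definition bw :: "'a::linorder list \<Rightarrow> 'a list" where
  "bw v = map last (sorted_list_of_set (conjugates v))"

definition perfectly_clustering :: "'a::linorder list \<Rightarrow> bool" where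
  "perfectly_clustering v \<longleftrightarrow> primitive v \<and> sorted_wrt (\<ge>) (bw v)"

definition palindrome :: "'a list \<Rightarrow> bool" where
  "palindrome p \<longleftrightarrow> rev p = p"

(* The word a_1 pi_1 a_2 ... pi_{k-1} a_k, with as = [a_1,...,a_k], pis = [pi_1,...,pi_{k-1}] *)
definition factor_word :: "'a list \<Rightarrow> 'a list list \<Rightarrow> 'a list" where
  "factor_word as pis = [as ! 0] @ concat (map (\<lambda>i. pis ! i @ [as ! Suc i]) [0..<length pis])"

definition special_factorization :: "'a::linorder list \<Rightarrow> 'a list \<Rightarrow> 'a list list \<Rightarrow> bool" where
  "special_factorization w as pis \<longleftrightarrow>
     as \<noteq> [] \<and> length pis = length as - 1 \<and> sorted_wrt (<) as \<and> set as = set w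
     \<and> w = factor_word as pis"

definition palindromic_special_factorization :: "'a::linorder list \<Rightarrow> 'a list \<Rightarrow> 'a list list \<Rightarrow> bool" where
  "palindromic_special_factorization w as pis \<longleftrightarrow>
     special_factorization w as pis \<and> (\<forall>p \<in> set pis. palindrome p)"

end

theory Submission
  imports Defs
begin

text \<open>
  Let n = |w| and let rank t be the rank of the conjugate rotate t w among the conjugates of w;
  since w is primitive, rank is a permutation of {0..<n}.  Perfect clustering says that
  conjugates ending with a larger letter come first.  So the conjugates starting with a letter x
  occupy a block of count_list w x ranks beginning at the number of letters smaller than x, and
  those ending with x a block of the same size beginning at the number of letters larger
  than x.  Comparing these blocks, one finds a shift c such that the conjugate of index c - t
  reads w backwards from position t - 1 and has rank n - 1 - rank t.

  Cut w into the segments pi_h a_(h+1).  For a position t in such a segment and its mirror image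
  t' in the segment, the conjugate reading w backwards from t - 1 and the conjugate rotate t' w
  agree along the palindrome pi_h and then show a_h < a_(h+1); so rank t + rank t' \<ge> n.
  Summing, twice the rank sum of every segment is at least n times its length.  Since the
  segments partition {1..<n} and the ranks form a permutation, all these inequalities are
  equalities.

  If pi_(s-1) is empty, its segment is the position of a_s alone, whose rank is thus n/2.  This
  rank is at least the number of letters smaller than a_s (the conjugate starts with a_s) and at
  least the number of letters larger than a_(s-1) (it ends with a_(s-1)); as these two numbers
  add up to n, both equal n/2.
\<close>

section \<open>Lexicographic order and rotations\<close>

lemma list_less_nthI:
  fixes u v :: "'a::linorder list"
  assumes "j < length u" "j < length v"
    and "\<And>i. i < j \<Longrightarrow> u ! i = v ! i" and "u ! j < v ! j"
  shows "u < v"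
proof -
  have "take j u = take j v"
    using assms by (intro nth_equalityI) auto
  then show ?thesis
    using assms unfolding list_less_def lexord_take_index_conv by auto
qed

lemma snoc_less_snoc_iff:
  fixes u v :: "'a::linorder list"
  shows "length u = length v \<Longrightarrow> u @ [x] < v @ [x] \<longleftrightarrow> u < v"
  by (induction u v rule: list_induct2) auto

lemma rotate_eq_Cons_tl:
  "xs \<noteq> [] \<Longrightarrow> rotate t xs = xs ! (t mod length xs) # tl (rotate t xs)"
  by (metis hd_rotate_conv_nth list.collapse rotate_is_Nil_conv)

lemma rotate_Suc_eq_snoc:
  "xs \<noteq> [] \<Longrightarrow> rotate (Suc t) xs = tl (rotate t xs) @ [xs ! (t mod length xs)]"
  by (metis rotate_eq_Cons_tl rotate1.simps(2) rotate_Suc)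

lemma nth_rotate_no_wrap: "t + i < length xs \<Longrightarrow> rotate t xs ! i = xs ! (t + i)"
  by (simp add: nth_rotate)

lemma rotate_mod_length: "rotate (t mod length xs) xs = rotate t xs"
  by (metis rotate_conv_mod)

lemma rotate_in_conjugates: "v \<noteq> [] \<Longrightarrow> rotate i v \<in> conjugates v"
  unfolding conjugates_def
  by (metis (mono_tags, lifting) length_greater_0_conv mem_Collect_eq mod_less_divisor
      rotate_mod_length)

lemma finite_conjugates: "finite (conjugates v)"
  unfolding conjugates_def by simp

lemma card_Suc_mod_eq:
  assumes "0 < n"
  shows "card {j. j < n \<and> P (Suc j mod n)} = card {j. j < n \<and> P j}"
proof -
  let ?f = "\<lambda>j. Suc j mod n"
  have inj: "inj_on ?f {..<n}"
    by (rule inj_onI) (auto simp: mod_Suc split: if_splits)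
  then have "?f ` {..<n} = {..<n}"
    using assms by (intro endo_inj_surj) auto
  then have "?f ` {j. j < n \<and> P (?f j)} = {j. j < n \<and> P j}"
    by (auto simp: set_eq_iff image_iff) (metis lessThan_iff)
  moreover have "card (?f ` {j. j < n \<and> P (?f j)}) = card {j. j < n \<and> P (?f j)}"
    by (rule card_image, rule inj_on_subset[OF inj]) auto
  ultimately show ?thesis
    by simp
qed

lemma commuting_append_eq_concat_replicate:
  "v @ u = u @ v \<Longrightarrow> length v = q * length u \<Longrightarrow> v = concat (replicate q u)"
proof (induction q arbitrary: v)
  case 0
  then show ?case by simp
next
  case (Suc q)
  then have "length u \<le> length v"
    by simp
  then have "take (length u) v = u"
    using arg_cong[OF Suc.prems(1), of "take (length u)"] by simp
  then obtain v' where v: "v = u @ v'"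
    by (metis append_take_drop_id)
  with Suc.prems have "v' @ u = u @ v'" and "length v' = q * length u"
    by auto
  with Suc.IH v show ?case by simp
qed

lemma rotate_gcd_self:
  assumes "rotate d xs = xs"
  shows "rotate (gcd d (length xs)) xs = xs"
proof (cases "d = 0")
  case False
  have multiple: "rotate (d * k) xs = xs" for k
    by (induction k) (simp_all add: rotate_rotate[symmetric] assms)
  obtain a b where bezout: "d * a = length xs * b + gcd d (length xs)"
    using bezout_nat[OF False] by blast
  have "xs = rotate ((d * a) mod length xs) xs"
    using multiple[of a] rotate_conv_mod[of "d * a" xs] by simp
  also have "(d * a) mod length xs = gcd d (length xs) mod length xs"
    unfolding bezout by simp
  finally show ?thesis
    using rotate_conv_mod[of "gcd d (length xs)" xs] by simp
qed simp

lemma primitive_rotate_neq: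
  assumes prim: "primitive xs" and "0 < d" "d < length xs"
  shows "rotate d xs \<noteq> xs"
proof
  assume "rotate d xs = xs"
  define g where "g = gcd d (length xs)"
  have "rotate g xs = xs"
    using rotate_gcd_self[OF \<open>rotate d xs = xs\<close>] by (simp add: g_def)
  have "g < length xs"
    using gcd_le1_nat[of d "length xs"] \<open>0 < d\<close> \<open>d < length xs\<close> unfolding g_def by linarith
  obtain k where k: "length xs = k * g"
    using dvd_def[of g "length xs"] by (metis gcd_dvd2 g_def mult.commute)
  with \<open>g < length xs\<close> have "k \<noteq> 0" "k \<noteq> 1"
    by auto
  have "drop g xs @ take g xs = take g xs @ drop g xs"
    using rotate_append[of "take g xs" "drop g xs"] \<open>rotate g xs = xs\<close> \<open>g < length xs\<close>
    by simp
  moreover have "length (drop g xs) = (k - 1) * length (take g xs)"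
    using k \<open>g < length xs\<close> by (simp add: diff_mult_distrib)
  ultimately have "drop g xs = concat (replicate (k - 1) (take g xs))"
    by (rule commuting_append_eq_concat_replicate)
  then have "xs = concat (replicate (Suc (k - 1)) (take g xs))"
    by (metis append_take_drop_id concat.simps(2) replicate_Suc)
  with \<open>k \<noteq> 0\<close> have "xs = concat (replicate k (take g xs))"
    by simp
  then show False
    using prim \<open>k \<noteq> 1\<close> unfolding primitive_def by blast
qed

lemma primitive_inj_on_rotate:
  assumes "primitive xs"
  shows "inj_on (\<lambda>i. rotate i xs) {..<length xs}"
proof -
  have neq: "rotate i xs \<noteq> rotate j xs" if "i < j" "j < length xs" for i j
  proof
    assume "rotate i xs = rotate j xs"
    then have "rotate (length xs - i) (rotate i xs) = rotate (length xs - i) (rotate j xs)"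
      by simp
    then have "rotate (length xs) xs = rotate (j - i + length xs) xs"
      using that by (simp only: rotate_rotate) (simp add: algebra_simps)
    then have "rotate (j - i) xs = xs"
      using rotate_conv_mod[of "j - i + length xs" xs] rotate_conv_mod[of "j - i" xs] by simp
    then show False
      using primitive_rotate_neq[OF assms, of "j - i"] that by simp
  qed
  show ?thesis
  proof (rule inj_onI)
    fix i j
    assume "i \<in> {..<length xs}" "j \<in> {..<length xs}" "rotate i xs = rotate j xs"
    then show "i = j"
      using neq[of i j] neq[of j i] by (cases i j rule: linorder_cases) simp_all
  qed
qed

section \<open>Letter counts and sums\<close>

definition count_less :: "'a::linorder list \<Rightarrow> 'a \<Rightarrow> nat" where
  "count_less xs x = length (filter (\<lambda>y. y < x) xs)"

definition count_greater :: "'a::linorder list \<Rightarrow> 'a \<Rightarrow> nat" where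
  "count_greater xs x = length (filter (\<lambda>y. x < y) xs)"

lemma count_less_add_count_list_add_count_greater:
  "count_less xs x + count_list xs x + count_greater xs x = length xs"
  unfolding count_less_def count_greater_def by (induction xs) auto

lemma count_greater_add_count_list_le:
  "x < y \<Longrightarrow> count_greater xs y + count_list xs y \<le> count_greater xs x"
  unfolding count_greater_def by (induction xs) auto

lemma eq_if_count_greater_intervals_overlap:
  assumes "count_greater xs x \<le> r" "r < count_greater xs x + count_list xs x"
    and "count_greater xs y \<le> r" "r < count_greater xs y + count_list xs y"
  shows "x = y"
  using count_greater_add_count_list_le[of x y xs] count_greater_add_count_list_le[of y x xs] assms
  by (cases x y rule: linorder_cases) linarith+

lemma count_greater_add_count_less_gap:
  "\<forall>y\<in>set xs. y \<le> x \<or> z \<le> y \<Longrightarrow> x < z \<Longrightarrow>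
    count_greater xs x + count_less xs z = length xs"
  unfolding count_less_def count_greater_def by (induction xs) auto

lemma sorted_wrt_less_nth_gap:
  fixes xs :: "'a::linorder list"
  assumes "sorted_wrt (<) xs" "y \<in> set xs" "Suc h < length xs"
  shows "y \<le> xs ! h \<or> xs ! Suc h \<le> y"
proof -
  obtain i where "i < length xs" "y = xs ! i"
    using assms(2) by (metis in_set_conv_nth)
  then show ?thesis
    using sorted_nth_mono[OF strict_sorted_imp_sorted[OF assms(1)]] assms(3)
    by (cases "i \<le> h") (simp_all add: not_le Suc_le_eq)
qed

lemma sum_count_list_filter:
  assumes "set xs \<subseteq> X" "finite X"
  shows "sum (count_list xs) {y \<in> X. P y} = length (filter P xs)"
proof -
  have "sum (count_list xs) {y \<in> X. P y} = sum (count_list (filter P xs)) {y \<in> X. P y}"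
    by (rule sum.cong)
      (auto simp: count_list_eq_length_filter filter_filter
        intro!: arg_cong[of _ _ length] filter_cong)
  also have "\<dots> = length (filter P xs)"
    using assms by (intro sum_count_set) auto
  finally show ?thesis .
qed

lemma sum_nth_distinct:
  "distinct as \<Longrightarrow> H \<subseteq> {..<length as} \<Longrightarrow> (\<Sum>h\<in>H. f (as ! h)) = sum f ((!) as ` H)"
  by (simp add: sum.reindex inj_on_nth subset_iff)

lemma sum_count_list_sorted_prefix:
  assumes sorted: "sorted_wrt (<) as" and "set xs \<subseteq> set as" and "s < length as"
  shows "(\<Sum>h<s. count_list xs (as ! h)) = count_less xs (as ! s)"
proof -
  have "(!) as ` {..<s} = {y \<in> set as. y < as ! s}"
  proof (intro equalityI subsetI)
    fix y assume "y \<in> {y \<in> set as. y < as ! s}"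
    then obtain i where "i < length as" "y = as ! i" "as ! i < as ! s"
      by (auto simp: in_set_conv_nth)
    moreover have "i < s"
      using sorted_wrt_nth_less[OF sorted, of s i] \<open>i < length as\<close> \<open>as ! i < as ! s\<close>
      by (cases i s rule: linorder_cases) auto
    ultimately show "y \<in> (!) as ` {..<s}"
      by blast
  qed (use assms sorted_wrt_nth_less[OF sorted] in auto)
  then show ?thesis
    using assms sum_nth_distinct[of as "{..<s}" "count_list xs"]
      sum_count_list_filter[of xs "set as"]
    by (simp add: strict_sorted_iff count_less_def)
qed

lemma sum_count_list_total:
  assumes "distinct as" and "set xs \<subseteq> set as"
  shows "(\<Sum>h<length as. count_list xs (as ! h)) = length xs"
  using assms sum_nth_distinct[of as "{..<length as}" "count_list xs"] sum_count_set[of xs "set as"]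
  by (simp add: set_conv_nth lessThan_def image_Collect)

lemma sum_sum_consecutive_intervals:
  fixes f :: "nat \<Rightarrow> nat"
  assumes "mono f"
  shows "(\<Sum>h<k. \<Sum>t\<in>{f h..<f (Suc h)}. g t) = (\<Sum>t\<in>{f 0..<f k}. g t)"
proof (induction k)
  case (Suc k)
  then show ?case
    using sum.atLeastLessThan_concat[of "f 0" "f k" "f (Suc k)" g] monoD[OF assms] by simp
qed simp

section \<open>Positions in a factorization\<close>

text \<open>The 0-based index of the letter as ! h, the paper's a_(h+1), in factor_word as pis.\<close>

definition letter_pos :: "'b list list \<Rightarrow> nat \<Rightarrow> nat" where
  "letter_pos pis h = h + (\<Sum>i<h. length (pis ! i))"

lemma letter_pos_0 [simp]: "letter_pos pis 0 = 0"
  by (simp add: letter_pos_def)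

lemma letter_pos_Suc: "letter_pos pis (Suc h) = letter_pos pis h + length (pis ! h) + 1"
  by (simp add: letter_pos_def)

lemma mono_letter_pos: "mono (letter_pos pis)"
  by (simp add: mono_iff_le_Suc letter_pos_Suc)

lemma factor_word_snoc:
  "factor_word as (ps @ [p]) = factor_word as ps @ p @ [as ! Suc (length ps)]"
proof -
  have "map (\<lambda>i. (ps @ [p]) ! i @ [as ! Suc i]) [0..<length ps]
      = map (\<lambda>i. ps ! i @ [as ! Suc i]) [0..<length ps]"
    by (simp add: nth_append)
  then show ?thesis
    unfolding factor_word_def by (simp del: map_eq_conv)
qed

lemma factor_word_take_Suc:
  "h < length pis \<Longrightarrow>
    factor_word as (take (Suc h) pis) = factor_word as (take h pis) @ pis ! h @ [as ! Suc h]"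
  using factor_word_snoc[of as "take h pis" "pis ! h"] by (simp add: take_Suc_conv_app_nth)

lemma length_factor_word_take:
  "h \<le> length pis \<Longrightarrow> length (factor_word as (take h pis)) = Suc (letter_pos pis h)"
proof (induction h)
  case 0
  then show ?case by (simp add: factor_word_def)
next
  case (Suc h)
  then show ?case by (simp add: factor_word_take_Suc letter_pos_Suc)
qed

lemma factor_word_take_prefix:
  "h \<le> length pis \<Longrightarrow> \<exists>r. factor_word as pis = factor_word as (take h pis) @ r"
proof (induction "length pis - h" arbitrary: h)
  case 0
  then show ?case by simp
next
  case (Suc d)
  then have "d = length pis - Suc h" "Suc h \<le> length pis"
    by simp_all
  then obtain r where "factor_word as pis = factor_word as (take (Suc h) pis) @ r"
    using Suc.hyps(1) by blast
  then show ?case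
    using Suc.hyps(2) by (simp add: factor_word_take_Suc)
qed

lemma length_factor_word: "length (factor_word as pis) = Suc (letter_pos pis (length pis))"
  using length_factor_word_take[of "length pis" pis as] by simp

lemma nth_factor_word_letter_pos:
  assumes "h \<le> length pis"
  shows "factor_word as pis ! letter_pos pis h = as ! h"
proof -
  obtain r where r: "factor_word as pis = factor_word as (take h pis) @ r"
    using factor_word_take_prefix[OF assms] by blast
  have "factor_word as (take h pis) ! letter_pos pis h = as ! h"
  proof (cases h)
    case 0
    then show ?thesis by (simp add: factor_word_def)
  next
    case (Suc h')
    then show ?thesis
      using assms length_factor_word_take[of h' pis as]
      by (simp add: factor_word_take_Suc letter_pos_Suc nth_append)
  qed
  then show ?thesis
    using r length_factor_word_take[OF assms, of as] by (simp add: nth_append)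
qed

lemma nth_factor_word_pis:
  assumes "h < length pis" "i < length (pis ! h)"
  shows "factor_word as pis ! (letter_pos pis h + 1 + i) = pis ! h ! i"
proof -
  obtain r where "factor_word as pis = factor_word as (take (Suc h) pis) @ r"
    using factor_word_take_prefix[of "Suc h" pis as] assms by auto
  then show ?thesis
    using assms length_factor_word_take[of h pis as]
    by (simp add: factor_word_take_Suc nth_append)
qed

section \<open>Ranks of the conjugates of a perfectly clustering word\<close>

lemma perfectly_clustering_less_if_last_greater:
  assumes "perfectly_clustering v" "u \<in> conjugates v" "u' \<in> conjugates v" "last u' < last u"
  shows "u < u'"
proof (rule ccontr)
  define cs where "cs = sorted_list_of_set (conjugates v)"
  have set_cs: "set cs = conjugates v" and sorted_cs: "sorted_wrt (<) cs"
    by (simp_all add: cs_def finite_conjugates strict_sorted_list_of_set)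
  assume "\<not> u < u'"
  moreover have "u \<noteq> u'"
    using assms(4) by auto
  ultimately have "u' < u"
    by simp
  obtain a b where a: "a < length cs" "cs ! a = u" and b: "b < length cs" "cs ! b = u'"
    using assms(2,3) set_cs by (metis in_set_conv_nth)
  have "b < a"
    using sorted_wrt_nth_less[OF sorted_cs, of a b] a b \<open>u' < u\<close>
    by (cases a b rule: linorder_cases) auto
  then have "last (cs ! a) \<le> last (cs ! b)"
    using assms(1) a(1) sorted_wrt_nth_less[of "(\<ge>)" "bw v" b a]
    unfolding perfectly_clustering_def bw_def cs_def by simp
  then show False
    using a b assms(4) by simp
qed

locale perfectly_clustering_word =
  fixes w :: "'a::linorder list"
  assumes perfectly_clustering: "perfectly_clustering w"
begin

lemma primitive: "primitive w"
  using perfectly_clustering by (simp add: perfectly_clustering_def)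

lemma w_ne_Nil: "w \<noteq> []"
  using primitive by (simp add: primitive_def)

abbreviation letter :: "nat \<Rightarrow> 'a" where
  "letter t \<equiv> w ! (t mod length w)"

definition rank :: "nat \<Rightarrow> nat" where
  "rank t = card {j. j < length w \<and> rotate j w < rotate t w}"

definition rank_in_block :: "nat \<Rightarrow> nat" where
  "rank_in_block t = card {j. j < length w \<and> w ! j = letter t \<and> rotate j w < rotate t w}"

lemma rank_mod: "rank (t mod length w) = rank t"
  by (simp add: rank_def rotate_mod_length)

lemma rotate_less_iff:
  "rotate j w < rotate t w \<longleftrightarrow>
    letter j < letter t \<or> letter j = letter t \<and> tl (rotate j w) < tl (rotate t w)"
  using rotate_eq_Cons_tl[OF w_ne_Nil, of j] rotate_eq_Cons_tl[OF w_ne_Nil, of t]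
  by (metis Cons_less_Cons)

text \<open>rotate (Suc j) w ends with letter j; this is where perfect clustering enters.\<close>

lemma rotate_Suc_less_iff:
  "rotate (Suc j) w < rotate (Suc t) w \<longleftrightarrow>
    letter t < letter j \<or> letter j = letter t \<and> rotate j w < rotate t w"
proof -
  have last: "last (rotate (Suc i) w) = letter i" for i
    by (simp only: rotate_Suc_eq_snoc[OF w_ne_Nil] last_snoc)
  have clustering: "rotate (Suc i) w < rotate (Suc i') w" if "letter i' < letter i" for i i'
    by (rule perfectly_clustering_less_if_last_greater[OF perfectly_clustering
          rotate_in_conjugates[OF w_ne_Nil] rotate_in_conjugates[OF w_ne_Nil]])
      (simp only: last that)
  consider "letter t < letter j" | "letter j < letter t" | "letter j = letter t"
    by fastforce
  then show ?thesis
  proof cases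
    case 1
    with clustering[of t j] have "rotate (Suc j) w < rotate (Suc t) w"
      by blast
    with 1 show ?thesis
      by blast
  next
    case 2
    with clustering[of j t] have "rotate (Suc t) w < rotate (Suc j) w"
      by blast
    with 2 show ?thesis
      by (metis less_asym less_irrefl)
  next
    case 3
    have "rotate (Suc j) w < rotate (Suc t) w \<longleftrightarrow> tl (rotate j w) < tl (rotate t w)"
      using snoc_less_snoc_iff[of "tl (rotate j w)" "tl (rotate t w)" "letter t"] 3
      by (simp add: rotate_Suc_eq_snoc[OF w_ne_Nil] del: rotate_Suc)
    then show ?thesis
      using 3 rotate_less_iff[of j t] by simp
  qed
qed

lemma rank_eq_count_less_add: "rank t = count_less w (letter t) + rank_in_block t"
proof -
  have "{j. j < length w \<and> rotate j w < rotate t w} =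
      {j. j < length w \<and> w ! j < letter t} \<union>
      {j. j < length w \<and> w ! j = letter t \<and> rotate j w < rotate t w}"
    using rotate_less_iff by auto
  then have "rank t = card ({j. j < length w \<and> w ! j < letter t} \<union>
      {j. j < length w \<and> w ! j = letter t \<and> rotate j w < rotate t w})"
    by (simp add: rank_def)
  also have "\<dots> = card {j. j < length w \<and> w ! j < letter t} + rank_in_block t"
    unfolding rank_in_block_def by (rule card_Un_disjoint) auto
  finally show ?thesis
    unfolding count_less_def length_filter_conv_card .
qed

lemma rank_Suc_eq_count_greater_add: "rank (Suc t) = count_greater w (letter t) + rank_in_block t"
proof -
  have "rank (Suc t) =
      card {j. j < length w \<and> rotate (Suc j mod length w) w < rotate (Suc t) w}"
    using card_Suc_mod_eq[of "length w" "\<lambda>j. rotate j w < rotate (Suc t) w"] w_ne_Nil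
    by (simp add: rank_def)
  also have "{j. j < length w \<and> rotate (Suc j mod length w) w < rotate (Suc t) w} =
      {j. j < length w \<and> letter t < w ! j} \<union>
      {j. j < length w \<and> w ! j = letter t \<and> rotate j w < rotate t w}"
  proof -
    have "rotate (Suc j mod length w) w < rotate (Suc t) w \<longleftrightarrow>
        letter t < w ! j \<or> w ! j = letter t \<and> rotate j w < rotate t w" if "j < length w" for j
      using rotate_Suc_less_iff[of j t] that by (simp only: rotate_mod_length mod_less)
    then show ?thesis
      by blast
  qed
  also have "card \<dots> = card {j. j < length w \<and> letter t < w ! j} + rank_in_block t"
    unfolding rank_in_block_def by (rule card_Un_disjoint) auto
  finally show ?thesis
    unfolding count_greater_def length_filter_conv_card .
qed

lemma rank_in_block_less: "rank_in_block t < count_list w (letter t)"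
proof -
  have "t mod length w \<in> {j. j < length w \<and> w ! j = letter t}"
    using w_ne_Nil by simp
  moreover have "t mod length w \<notin> {j. j < length w \<and> w ! j = letter t \<and> rotate j w < rotate t w}"
    by (simp add: rotate_mod_length)
  ultimately have "{j. j < length w \<and> w ! j = letter t \<and> rotate j w < rotate t w}
      \<subset> {j. j < length w \<and> w ! j = letter t}"
    by blast
  then have "rank_in_block t < card {j. j < length w \<and> w ! j = letter t}"
    unfolding rank_in_block_def by (simp add: psubset_card_mono)
  also have "\<dots> = count_list w (letter t)"
    by (simp add: count_list_eq_length_filter length_filter_conv_card eq_commute)
  finally show ?thesis .
qed

lemma rank_less_length: "rank t < length w"
proof -
  have "{j. j < length w \<and> rotate j w < rotate t w} \<subseteq> {..<length w} - {t mod length w}"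
    by (auto simp: rotate_mod_length)
  then have "rank t \<le> card ({..<length w} - {t mod length w})"
    unfolding rank_def by (intro card_mono) auto
  moreover have "0 < length w"
    using w_ne_Nil by simp
  ultimately show ?thesis
    by (simp only: card_Diff_singleton card_lessThan lessThan_iff mod_less_divisor)
qed

lemma rank_strict_mono:
  assumes "rotate a w < rotate b w"
  shows "rank a < rank b"
proof -
  have "a mod length w \<in> {j. j < length w \<and> rotate j w < rotate b w}"
    using assms w_ne_Nil by (simp add: rotate_mod_length)
  moreover have "a mod length w \<notin> {j. j < length w \<and> rotate j w < rotate a w}"
    by (simp add: rotate_mod_length)
  moreover have "{j. j < length w \<and> rotate j w < rotate a w}
      \<subseteq> {j. j < length w \<and> rotate j w < rotate b w}"
    using assms by auto
  ultimately have "{j. j < length w \<and> rotate j w < rotate a w}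
      \<subset> {j. j < length w \<and> rotate j w < rotate b w}"
    by blast
  then show ?thesis
    unfolding rank_def by (simp add: psubset_card_mono)
qed

lemma bij_betw_rank: "bij_betw rank {..<length w} {..<length w}"
proof -
  have "inj_on rank {..<length w}"
  proof (rule inj_onI)
    fix i j
    assume "i \<in> {..<length w}" "j \<in> {..<length w}" "rank i = rank j"
    then have "\<not> rotate i w < rotate j w" "\<not> rotate j w < rotate i w"
      using rank_strict_mono by (metis less_irrefl)+
    then show "i = j"
      using inj_onD[OF primitive_inj_on_rotate[OF primitive]] \<open>i \<in> _\<close> \<open>j \<in> _\<close>
      by fastforce
  qed
  moreover have "rank ` {..<length w} \<subseteq> {..<length w}"
    using rank_less_length by auto
  ultimately show ?thesis
    by (simp add: bij_betw_def endo_inj_surj)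
qed

lemma sum_rank_le: "2 * (\<Sum>t\<in>{1..<length w}. rank t) \<le> length w * (length w - 1)"
proof -
  obtain m where m: "length w = Suc m"
    using w_ne_Nil by (cases w) auto
  have "(\<Sum>t\<in>{1..<length w}. rank t) \<le> (\<Sum>t<length w. rank t)"
    by (rule sum_mono2) auto
  also have "\<dots> = (\<Sum>i<length w. i)"
    using sum.reindex_bij_betw[OF bij_betw_rank, of id] by simp
  also have "\<dots> = (\<Sum>i = 0..m. i)"
    by (simp add: m lessThan_Suc_atMost atLeast0AtMost)
  finally show ?thesis
    using double_gauss_sum[of m, where ?'a = nat] m by simp
qed

lemma rank_reversal_step:
  assumes "rank (Suc u) + rank t = length w - 1"
  shows "letter u = letter t" and "rank u + rank (Suc t) = length w - 1"
proof -
  let ?x = "letter t" and ?y = "letter u"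
  have total: "count_less w ?x + count_list w ?x + count_greater w ?x = length w"
    by (rule count_less_add_count_list_add_count_greater)
  have "count_greater w ?y \<le> rank (Suc u)" "rank (Suc u) < count_greater w ?y + count_list w ?y"
    using rank_Suc_eq_count_greater_add[of u] rank_in_block_less[of u] by simp_all
  moreover have "count_greater w ?x \<le> rank (Suc u)"
    "rank (Suc u) < count_greater w ?x + count_list w ?x"
    using rank_eq_count_less_add[of t] rank_in_block_less[of t] total assms by linarith+
  ultimately show "?y = ?x"
    using eq_if_count_greater_intervals_overlap by blast
  then have "rank u + count_greater w ?x = rank (Suc u) + count_less w ?x"
    using rank_eq_count_less_add[of u] rank_Suc_eq_count_greater_add[of u] by simp
  then show "rank u + rank (Suc t) = length w - 1"
    using rank_eq_count_less_add[of t] rank_Suc_eq_count_greater_add[of t] assms by linarith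
qed

lemma rank_reversal:
  assumes "rank c + rank 0 = length w - 1" and "t \<le> length w"
  shows "rank (c + length w - t) + rank t = length w - 1 \<and>
    (\<forall>i<t. letter (c + length w - Suc i) = w ! i)"
  using assms(2)
proof (induction t)
  case 0
  have "rank (c + length w) = rank c"
    using rank_mod[of "c + length w"] rank_mod[of c] by simp
  with assms(1) show ?case
    by simp
next
  case (Suc t)
  then have IH: "rank (Suc (c + length w - Suc t)) + rank t = length w - 1"
      "\<forall>i<t. letter (c + length w - Suc i) = w ! i"
    by (simp_all add: Suc_diff_Suc)
  from rank_reversal_step[OF IH(1)] Suc.prems show ?case
    using IH(2) less_Suc_eq by auto
qed

lemma reversal_shift_exists:
  obtains c where "\<And>t. t \<le> length w \<Longrightarrow> rank (c + length w - t) + rank t = length w - 1"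
    and "\<And>t i. i < t \<Longrightarrow> t \<le> length w \<Longrightarrow>
      rotate (c + length w - t) w ! i = w ! (t - 1 - i)"
proof -
  have "length w - 1 - rank 0 \<in> rank ` {..<length w}"
    using bij_betw_rank w_ne_Nil unfolding bij_betw_def by auto
  then obtain c where "rank c = length w - 1 - rank 0"
    by auto
  then have start: "rank c + rank 0 = length w - 1"
    using rank_less_length[of 0] by simp
  show ?thesis
  proof (rule that)
    show "rank (c + length w - t) + rank t = length w - 1" if "t \<le> length w" for t
      using rank_reversal[OF start that] by simp
    show "rotate (c + length w - t) w ! i = w ! (t - 1 - i)" if "i < t" "t \<le> length w" for t i
    proof -
      have "c + length w - t + i = c + length w - Suc (t - 1 - i)"
        using that by linarith
      then have "rotate (c + length w - t) w ! i = letter (c + length w - Suc (t - 1 - i))"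
        using that by (simp add: nth_rotate)
      also have "\<dots> = w ! (t - 1 - i)"
      proof -
        have "\<forall>i<length w. letter (c + length w - Suc i) = w ! i"
          using rank_reversal[OF start, of "length w"] by simp
        moreover have "t - 1 - i < length w"
          using that by simp
        ultimately show ?thesis
          by blast
      qed
      finally show ?thesis .
    qed
  qed
qed

end

section \<open>Segments of a palindromic special factorization\<close>

locale perfectly_clustering_factorization = perfectly_clustering_word +
  fixes as :: "'a list" and pis :: "'a list list"
  assumes palindromic_factorization: "palindromic_special_factorization w as pis"
begin

lemma w_eq_factor_word: "w = factor_word as pis"
  and length_as: "length as = Suc (length pis)"
  and sorted_as: "sorted_wrt (<) as"
  and set_as: "set as = set w"
  using palindromic_factorization
  unfolding palindromic_special_factorization_def special_factorization_def by auto

lemma rev_pis: "h < length pis \<Longrightarrow> rev (pis ! h) = pis ! h"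
  using palindromic_factorization
  unfolding palindromic_special_factorization_def palindrome_def by simp

lemma length_w: "length w = Suc (letter_pos pis (length pis))"
  using length_factor_word w_eq_factor_word by metis

lemma letter_pos_less_length: "h \<le> length pis \<Longrightarrow> letter_pos pis h < length w"
  using monoD[OF mono_letter_pos] length_w by (metis less_Suc_eq_le)

lemma w_nth_letter_pos: "h \<le> length pis \<Longrightarrow> w ! letter_pos pis h = as ! h"
  using nth_factor_word_letter_pos w_eq_factor_word by metis

lemma w_nth_pis:
  "h < length pis \<Longrightarrow> i < length (pis ! h) \<Longrightarrow> w ! (letter_pos pis h + 1 + i) = pis ! h ! i"
  using nth_factor_word_pis w_eq_factor_word by metis

text \<open>The positions of pi_(h+1) a_(h+2) in w (in the paper's 1-based numbering).\<close>

definition segment :: "nat \<Rightarrow> nat set" where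
  "segment h = {letter_pos pis h + 1..<letter_pos pis (Suc h) + 1}"

lemma w_nth_mirror_in_segment:
  assumes "h < length pis" "i < j" "j \<le> length (pis ! h)"
  shows "w ! (letter_pos pis h + j - i) = w ! (letter_pos pis (Suc h) - j + i)"
proof -
  let ?p = "pis ! h"
  have "w ! (letter_pos pis h + j - i) = ?p ! (j - 1 - i)"
    using w_nth_pis[OF assms(1), of "j - 1 - i"] assms(2,3) by (simp add: Suc_diff_Suc)
  also have "\<dots> = rev ?p ! (j - 1 - i)"
    using rev_pis[OF assms(1)] by simp
  also have "\<dots> = ?p ! (length ?p - j + i)"
    using assms(2,3) by (simp add: rev_nth Suc_diff_Suc)
  also have "\<dots> = w ! (letter_pos pis h + 1 + (length ?p - j + i))"
    using w_nth_pis[OF assms(1), of "length ?p - j + i"] assms(2,3) by simp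
  also have "letter_pos pis h + 1 + (length ?p - j + i) = letter_pos pis (Suc h) - j + i"
    using assms(2,3) by (simp add: letter_pos_Suc)
  finally show ?thesis .
qed

text \<open>
  The conjugate reading w backwards from the j-th letter of pis ! h agrees on j letters with the
  conjugate starting j letters before as ! Suc h, since pis ! h is a palindrome, and then reads
  as ! h < as ! Suc h.
\<close>

lemma rank_add_rank_mirror_ge:
  assumes h: "h < length pis" and j: "j \<le> length (pis ! h)"
  shows "length w \<le> rank (letter_pos pis h + 1 + j) + rank (letter_pos pis (Suc h) - j)"
proof -
  obtain c
    where rank_c: "\<And>t. t \<le> length w \<Longrightarrow> rank (c + length w - t) + rank t = length w - 1"
      and read_back: "\<And>t i. i < t \<Longrightarrow> t \<le> length w \<Longrightarrow>
        rotate (c + length w - t) w ! i = w ! (t - 1 - i)"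
    using reversal_shift_exists by blast
  define t where "t = letter_pos pis h + 1 + j"
  define T where "T = letter_pos pis (Suc h)"
  have "T < length w"
    using letter_pos_less_length[of "Suc h"] h by (simp add: T_def)
  moreover have "t \<le> T"
    using j by (simp add: t_def T_def letter_pos_Suc)
  ultimately have t: "j < t" "t < length w"
    by (simp_all add: t_def)
  have "rotate (c + length w - t) w < rotate (T - j) w"
  proof (rule list_less_nthI[where j = j])
    show "j < length (rotate (c + length w - t) w)" "j < length (rotate (T - j) w)"
      using t by simp_all
    show "rotate (c + length w - t) w ! i = rotate (T - j) w ! i" if "i < j" for i
      using read_back[of i t] nth_rotate_no_wrap[of "T - j" i w]
        w_nth_mirror_in_segment[OF h that j] that t \<open>T < length w\<close> \<open>t \<le> T\<close>
      by (simp add: t_def T_def)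
    have "rotate (c + length w - t) w ! j = as ! h"
      using read_back[of j t] t w_nth_letter_pos[of h] h by (simp add: t_def)
    also have "\<dots> < as ! Suc h"
      using sorted_as h length_as by (simp add: sorted_wrt_nth_less)
    also have "\<dots> = rotate (T - j) w ! j"
      using nth_rotate_no_wrap[of "T - j" j w] w_nth_letter_pos[of "Suc h"] h
        \<open>T < length w\<close> \<open>t \<le> T\<close> t
      by (simp add: T_def)
    finally show "rotate (c + length w - t) w ! j < rotate (T - j) w ! j" .
  qed
  then have "rank (c + length w - t) < rank (T - j)"
    by (rule rank_strict_mono)
  with rank_c[of t] t show ?thesis
    by (simp add: t_def T_def)
qed

lemma segment_sum_le:
  assumes h: "h < length pis"
  shows "(\<Sum>t\<in>segment h. length w) \<le> 2 * (\<Sum>t\<in>segment h. rank t)"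
proof -
  define a where "a = letter_pos pis h + 1"
  define b where "b = letter_pos pis (Suc h) + 1"
  have "length w \<le> rank t + rank (b + a - Suc t)" if "t \<in> {a..<b}" for t
  proof -
    have "t - a \<le> length (pis ! h)"
      using that by (simp add: a_def b_def letter_pos_Suc) linarith
    then have "length w \<le>
        rank (letter_pos pis h + 1 + (t - a)) + rank (letter_pos pis (Suc h) - (t - a))"
      by (rule rank_add_rank_mirror_ge[OF h])
    moreover have "letter_pos pis h + 1 + (t - a) = t"
      "letter_pos pis (Suc h) - (t - a) = b + a - Suc t"
      using that by (simp_all add: a_def b_def letter_pos_Suc)
    ultimately show ?thesis
      by (simp only:)
  qed
  then have "(\<Sum>t\<in>{a..<b}. length w) \<le> (\<Sum>t\<in>{a..<b}. rank t + rank (b + a - Suc t))"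
    by (rule sum_mono)
  also have "\<dots> = (\<Sum>t\<in>{a..<b}. rank t) + (\<Sum>t\<in>{a..<b}. rank t)"
    by (simp add: sum.distrib flip: sum.atLeastLessThan_rev)
  finally show ?thesis
    by (simp add: segment_def a_def b_def)
qed

text \<open>
  Summed over all segments, the left-hand sides of segment_sum_le give |w| (|w| - 1), which by
  sum_rank_le bounds the sum of the right-hand sides; so every segment is tight.
\<close>

lemma segment_sum_eq:
  assumes h: "h < length pis"
  shows "2 * (\<Sum>t\<in>segment h. rank t) = length w * (letter_pos pis (Suc h) - letter_pos pis h)"
proof -
  define f where "f h = letter_pos pis h + 1" for h
  define F where "F h = (\<Sum>t\<in>segment h. length w)" for h
  define G where "G h = 2 * (\<Sum>t\<in>segment h. rank t)" for h
  have segment_f: "segment h = {f h..<f (Suc h)}" for h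
    by (simp add: segment_def f_def)
  have mono_f: "mono f"
    using mono_letter_pos by (simp add: f_def mono_def)
  have f_bounds: "f 0 = 1" "f (length pis) = length w"
    by (simp_all add: f_def length_w)
  have F_le_G: "F h \<le> G h" if "h < length pis" for h
    using segment_sum_le[OF that] by (simp only: F_def G_def)
  have "sum G {..<length pis} = 2 * (\<Sum>t\<in>{1..<length w}. rank t)"
    unfolding G_def segment_f
    by (simp only: sum_distrib_left[symmetric] sum_sum_consecutive_intervals[OF mono_f] f_bounds)
  also have "\<dots> \<le> length w * (length w - 1)"
    by (rule sum_rank_le)
  also have "\<dots> = (\<Sum>t\<in>{1..<length w}. length w)"
    by simp
  also have "\<dots> = sum F {..<length pis}"
    unfolding F_def segment_f by (simp only: sum_sum_consecutive_intervals[OF mono_f] f_bounds)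
  finally have "sum G {..<length pis} \<le> sum F {..<length pis}" .
  moreover have "sum F {..<length pis} \<le> sum G {..<length pis}"
    using F_le_G by (intro sum_mono) simp
  ultimately have "sum F {..<length pis} = sum G {..<length pis}"
    by simp
  then have "F h = G h"
    by (rule sum_mono_inv[of F _ G]) (use F_le_G h in auto)
  moreover have "F h = length w * (letter_pos pis (Suc h) - letter_pos pis h)"
    by (simp add: F_def segment_def)
  ultimately show ?thesis
    by (simp only: G_def)
qed

lemma count_less_half:
  assumes h: "h < length pis" and empty: "pis ! h = []"
  shows "2 * count_less w (as ! Suc h) = length w"
proof -
  have pos: "letter_pos pis (Suc h) = Suc (letter_pos pis h)"
    using empty by (simp add: letter_pos_Suc)
  have "2 * rank (Suc (letter_pos pis h)) = length w"
    using segment_sum_eq[OF h] pos by (simp add: segment_def)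
  moreover have "count_less w (as ! Suc h) \<le> rank (Suc (letter_pos pis h))"
    using rank_eq_count_less_add[of "letter_pos pis (Suc h)"] h
      w_nth_letter_pos[of "Suc h"] letter_pos_less_length[of "Suc h"]
    by (simp add: pos)
  moreover have "count_greater w (as ! h) \<le> rank (Suc (letter_pos pis h))"
    using rank_Suc_eq_count_greater_add[of "letter_pos pis h"] h
      w_nth_letter_pos[of h] letter_pos_less_length[of h]
    by simp
  moreover have "count_greater w (as ! h) + count_less w (as ! Suc h) = length w"
  proof (rule count_greater_add_count_less_gap)
    show "\<forall>y\<in>set w. y \<le> as ! h \<or> as ! Suc h \<le> y"
      using sorted_wrt_less_nth_gap[OF sorted_as, of _ h] set_as length_as h by simp
    show "as ! h < as ! Suc h"
      using sorted_wrt_nth_less[OF sorted_as, of h "Suc h"] length_as h by simp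
  qed
  ultimately show ?thesis
    by linarith
qed

end

theorem lemma4p7:
  fixes w :: "'a::linorder list" and as :: "'a list" and pis :: "'a list list" and s :: nat
  assumes "perfectly_clustering w" and "lyndon w"
    and "palindromic_special_factorization w as pis"
    and "1 \<le> s" and "s \<le> length as - 1"
    and "pis ! (s - 1) = []"
  shows "(\<Sum>h<s. count_list w (as ! h)) = (\<Sum>h\<in>{s..<length as}. count_list w (as ! h))"
proof -
  interpret perfectly_clustering_factorization w as pis
    using assms(1,3) by unfold_locales
  obtain h where s: "s = Suc h"
    using assms(4) by (cases s) auto
  have h: "h < length pis" and "s < length as"
    using assms(5) length_as s by simp_all
  have lower: "(\<Sum>h<s. count_list w (as ! h)) = count_less w (as ! s)"
    using sum_count_list_sorted_prefix[OF sorted_as _ \<open>s < length as\<close>] set_as by simp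
  have "(\<Sum>h<s. count_list w (as ! h)) + (\<Sum>h\<in>{s..<length as}. count_list w (as ! h)) = length w"
    using sum_count_list_total[of as w] \<open>s < length as\<close> sorted_as set_as
      sum.atLeastLessThan_concat[of 0 s "length as" "\<lambda>h. count_list w (as ! h)"]
    by (simp add: strict_sorted_iff atLeast0LessThan)
  with lower count_less_half[OF h] assms(6) s show ?thesis
    by simp
qed

end
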